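(* Let $A\in M_n(\mathbb{C})$ be a generalized row stochastic matrix with constant row sum $c\in\mathbb{C}$, i.e. $\sum_{j=1}^n A_{ij}=c$ for all $i=1,\dots,n$, and let $\sigma=\|A\|_2$. Then: (1) $|c|\le\sigma$. (2) If $|c|=\sigma$, then $A$ also has constant column sum $c$, i.e. $\sum_{i=1}^n A_{ij}=c$ for all $j=1,\dots,n$ (so $A$ is a $c$-generalized doubly stochastic matrix). (3) If $|c|=\sigma$, then $\mu_{\mathbb{B}}(A^m)=\sigma^m$ for every $m\in\mathbb{N}$ and every block structure $\mathbb{B}\subseteq M_n(\mathbb{C})$.
   Context: $\|M\|_2$ denotes the spectral norm (largest singular value) of $M\in M_n(\mathbb{C})$. A block structure is a set of the form $\mathbb{B}=\{\operatorname{diag}(\delta_1I_{k_1},\dots,\delta_rI_{k_r},\Delta_1,\dots,\Delta_s)\mid \delta_i\in\mathbb{C},\ \Delta_j\in M_{n_j}(\mathbb{C})\}\subseteq M_n(\mathbb{C})$ for some $r,s\in\mathbb{N}_0$ and positive integers $k_i,n_j$ with $\sum_{i=1}^r k_i+\sum_{j=1}^s n_j=n$. The structured singular value $\mu_{\mathbb{B}}:M_n(\mathbb{C})\to[0,\infty)$ is defined by $\mu_{\mathbb{B}}(M)=0$ if $\det(I+M\Delta)\neq0$ for all $\Delta\in\mathbb{B}$, and otherwise $\mu_{\mathbb{B}}(M)=\big(\min\{\|\Delta\|_2\mid \Delta\in\mathbb{B},\ \det(I+M\Delta)=0\}\big)^{-1}$. A $c$-generalized doubly stochastic matrix is a square complex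 matrix all of whose row sums and all of whose column sums equal $c$. *)

theory Defs
  imports Complex_Main "Jordan_Normal_Form.Determinant"
begin

definition vec_norm2 :: "complex vec \<Rightarrow> real" where
  "vec_norm2 v = sqrt (\<Sum>i<dim_vec v. (cmod (v $ i))\<^sup>2)"

definition spec_norm :: "complex mat \<Rightarrow> real" where
  "spec_norm A = Sup {vec_norm2 (A *\<^sub>v v) | v. v \<in> carrier_vec (dim_col A) \<and> vec_norm2 v = 1}"

text \<open>Block structure diag(delta_1 I_{k_1},...,delta_r I_{k_r},Delta_1,...,Delta_s),
  given the list ks of scalar-block sizes and the list ns of full-block sizes.\<close>
definition block_structure :: "nat list \<Rightarrow> nat list \<Rightarrow> complex mat set" where
  "block_structure ks ns =
    {diag_block_mat (map (\<lambda>(d, k). d \<cdot>\<^sub>m 1\<^sub>m k) (zip ds ks) @ Ds) | ds Ds.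
       length ds = length ks \<and> length Ds = length ns \<and>
       (\<forall>j<length ns. Ds ! j \<in> carrier_mat (ns ! j) (ns ! j))}"

definition ssv :: "complex mat set \<Rightarrow> complex mat \<Rightarrow> real" where
  "ssv B M =
    (if \<forall>D\<in>B. det (1\<^sub>m (dim_row M) + M * D) \<noteq> 0 then 0
     else inverse (Inf {spec_norm D | D. D \<in> B \<and> det (1\<^sub>m (dim_row M) + M * D) = 0}))"

end

theory Submission
  imports Defs "Jordan_Normal_Form.Char_Poly"
begin

(* The all-ones vector e is an eigenvector of A for the eigenvalue c, so |c| <= ||A||.
   If |c| = ||A||, then e attains the spectral norm, and the first variation of
   ||A (e + t x)||^2 <= ||A||^2 ||e + t x||^2 at t = 0 gives <A x, A e> = ||A||^2 <x, e>
   for every x; for x the k-th unit vector this says that conj c times the k-th column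
   sum equals |c|^2.  Moreover e is an eigenvector of A^m for c^m, whence ||A^m|| = |c|^m.
   Whenever M has an eigenvalue k with |k| = ||M||, every Delta making I + M Delta singular
   satisfies ||M|| ||Delta|| >= 1, and the scalar matrix Delta = -k^-1 I attains this bound;
   as every block structure contains the scalar matrices, mu(M) = ||M||. *)

lemma vec_norm2_nonneg: "vec_norm2 v \<ge> 0"
  unfolding vec_norm2_def by (simp add: sum_nonneg)

lemma power2_vec_norm2: "(vec_norm2 v)\<^sup>2 = (\<Sum>i<dim_vec v. (cmod (v $ i))\<^sup>2)"
  unfolding vec_norm2_def by (simp add: sum_nonneg)

lemma vec_norm2_eq_0_iff: "vec_norm2 v = 0 \<longleftrightarrow> v = 0\<^sub>v (dim_vec v)"
proof -
  have "vec_norm2 v = 0 \<longleftrightarrow> (\<forall>i<dim_vec v. (cmod (v $ i))\<^sup>2 = 0)"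
    unfolding vec_norm2_def by (auto simp: sum_nonneg_eq_0_iff)
  also have "\<dots> \<longleftrightarrow> v = 0\<^sub>v (dim_vec v)"
    by (auto simp: vec_eq_iff)
  finally show ?thesis .
qed

lemma vec_norm2_smult: "vec_norm2 (a \<cdot>\<^sub>v v) = cmod a * vec_norm2 v"
  unfolding vec_norm2_def
  by (simp add: norm_mult power_mult_distrib sum_distrib_left[symmetric] real_sqrt_mult)

lemma vec_norm2_unit_vec: "k < n \<Longrightarrow> vec_norm2 (unit_vec n k) = 1"
  unfolding vec_norm2_def by (simp add: if_distrib[of "\<lambda>x. (cmod x)\<^sup>2"] cong: if_cong)

lemma power2_vec_norm2_add:
  assumes "u \<in> carrier_vec n" "v \<in> carrier_vec n"
  shows "(vec_norm2 (u + v))\<^sup>2 = (vec_norm2 u)\<^sup>2 + 2 * Re (v \<bullet>c u) + (vec_norm2 v)\<^sup>2"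
proof -
  have "(cmod (u $ i + v $ i))\<^sup>2 = (cmod (u $ i))\<^sup>2 + 2 * Re (v $ i * cnj (u $ i)) + (cmod (v $ i))\<^sup>2" for i
    unfolding cmod_power2 by (simp add: algebra_simps power2_eq_square)
  then show ?thesis
    using assms by (simp add: power2_vec_norm2 scalar_prod_def sum.distrib sum_distrib_left
        lessThan_atLeast0)
qed

lemma mult_mat_vec_unit_vec:
  fixes A :: "'a :: semiring_1 mat"
  shows "A \<in> carrier_mat m n \<Longrightarrow> k < n \<Longrightarrow> A *\<^sub>v unit_vec n k = col A k"
  by (intro eq_vecI) auto

lemma smult_mat_mult_vec:
  fixes A :: "'a :: comm_ring mat"
  shows "A \<in> carrier_mat m n \<Longrightarrow> v \<in> carrier_vec n \<Longrightarrow> (a \<cdot>\<^sub>m A) *\<^sub>v v = a \<cdot>\<^sub>v (A *\<^sub>v v)"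
  by (intro eq_vecI) auto

lemma spec_norm_bdd_above:
  assumes A: "A \<in> carrier_mat m n"
  shows "bdd_above {vec_norm2 (A *\<^sub>v v) | v. v \<in> carrier_vec (dim_col A) \<and> vec_norm2 v = 1}"
proof (rule bdd_aboveI)
  fix x assume "x \<in> {vec_norm2 (A *\<^sub>v v) | v. v \<in> carrier_vec (dim_col A) \<and> vec_norm2 v = 1}"
  then obtain v where v: "v \<in> carrier_vec n" "vec_norm2 v = 1" and x: "x = vec_norm2 (A *\<^sub>v v)"
    using A by auto
  have entry_le: "cmod (v $ j) \<le> 1" if "j < n" for j
  proof -
    have "(cmod (v $ j))\<^sup>2 \<le> (\<Sum>i<n. (cmod (v $ i))\<^sup>2)"
      using that by (intro member_le_sum) auto
    also have "\<dots> = 1" using v A power2_vec_norm2[of v] by simp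
    finally show ?thesis by (simp add: power_le_one_iff abs_le_square_iff)
  qed
  have "cmod ((A *\<^sub>v v) $ i) \<le> (\<Sum>j<n. cmod (A $$ (i, j)))" if "i < m" for i
  proof -
    have "cmod ((A *\<^sub>v v) $ i) = cmod (\<Sum>j<n. A $$ (i, j) * v $ j)"
      using A v that by (simp add: scalar_prod_def lessThan_atLeast0)
    also have "\<dots> \<le> (\<Sum>j<n. cmod (A $$ (i, j)) * cmod (v $ j))"
      by (rule order_trans[OF norm_sum]) (simp add: norm_mult)
    also have "\<dots> \<le> (\<Sum>j<n. cmod (A $$ (i, j)))"
      using entry_le by (intro sum_mono) (simp add: mult_left_le)
    finally show ?thesis .
  qed
  then have "(\<Sum>i<m. (cmod ((A *\<^sub>v v) $ i))\<^sup>2) \<le> (\<Sum>i<m. (\<Sum>j<n. cmod (A $$ (i, j)))\<^sup>2)"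
    by (intro sum_mono power_mono) auto
  then show "x \<le> sqrt (\<Sum>i<m. (\<Sum>j<n. cmod (A $$ (i, j)))\<^sup>2)"
    unfolding x vec_norm2_def using A by simp
qed

lemma spec_norm_mult_vec_le:
  assumes A: "A \<in> carrier_mat m n" and x: "x \<in> carrier_vec n"
  shows "vec_norm2 (A *\<^sub>v x) \<le> spec_norm A * vec_norm2 x"
proof (cases "vec_norm2 x = 0")
  case True
  then have "x = 0\<^sub>v n" using x vec_norm2_eq_0_iff[of x] by simp
  then show ?thesis using A True by (simp add: vec_norm2_def)
next
  case False
  then have pos: "vec_norm2 x > 0" using vec_norm2_nonneg[of x] by linarith
  define v where "v = (1 / complex_of_real (vec_norm2 x)) \<cdot>\<^sub>v x"
  have "vec_norm2 v = 1" "v \<in> carrier_vec (dim_col A)"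
    unfolding v_def vec_norm2_smult using pos A x by (auto simp: norm_divide)
  then have "vec_norm2 (A *\<^sub>v v) \<le> spec_norm A"
    unfolding spec_norm_def by (intro cSup_upper spec_norm_bdd_above[OF A]) auto
  moreover have "A *\<^sub>v v = (1 / complex_of_real (vec_norm2 x)) \<cdot>\<^sub>v (A *\<^sub>v x)"
    unfolding v_def using A x by (simp add: mult_mat_vec)
  ultimately have "vec_norm2 (A *\<^sub>v x) / vec_norm2 x \<le> spec_norm A"
    using pos by (simp add: vec_norm2_smult norm_divide)
  then show ?thesis using pos by (simp add: divide_le_eq mult.commute)
qed

lemma spec_norm_nonneg:
  assumes "A \<in> carrier_mat m n" "n > 0"
  shows "spec_norm A \<ge> 0"
proof -
  have "vec_norm2 (A *\<^sub>v unit_vec n 0) \<le> spec_norm A * vec_norm2 (unit_vec n 0)"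
    using assms by (intro spec_norm_mult_vec_le) auto
  then show ?thesis
    using assms vec_norm2_unit_vec vec_norm2_nonneg[of "A *\<^sub>v unit_vec n 0"] by simp
qed

lemma spec_norm_le:
  assumes A: "A \<in> carrier_mat m n" and "n > 0"
    and bound: "\<And>x. x \<in> carrier_vec n \<Longrightarrow> vec_norm2 (A *\<^sub>v x) \<le> K * vec_norm2 x"
  shows "spec_norm A \<le> K"
  unfolding spec_norm_def
proof (rule cSup_least)
  show "{vec_norm2 (A *\<^sub>v v) | v. v \<in> carrier_vec (dim_col A) \<and> vec_norm2 v = 1} \<noteq> {}"
    using A \<open>n > 0\<close> vec_norm2_unit_vec[of 0 n] unit_vec_carrier[of n 0] by blast
qed (use A bound in force)

lemma eigenvalue_norm_le_spec_norm:
  assumes A: "A \<in> carrier_mat n n" and ev: "eigenvector A v k"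
  shows "cmod k \<le> spec_norm A"
proof -
  have v: "v \<in> carrier_vec n" "v \<noteq> 0\<^sub>v n" and Av: "A *\<^sub>v v = k \<cdot>\<^sub>v v"
    using A ev unfolding eigenvector_def by auto
  have pos: "vec_norm2 v > 0"
    using v vec_norm2_eq_0_iff[of v] vec_norm2_nonneg[of v] by fastforce
  have "cmod k * vec_norm2 v \<le> spec_norm A * vec_norm2 v"
    using spec_norm_mult_vec_le[OF A v(1)] by (simp add: Av vec_norm2_smult)
  then show ?thesis using pos by simp
qed

lemma spec_norm_smult_one_mat:
  assumes "n > 0"
  shows "spec_norm (a \<cdot>\<^sub>m 1\<^sub>m n) = cmod a"
proof (rule antisym)
  show "spec_norm (a \<cdot>\<^sub>m 1\<^sub>m n) \<le> cmod a"
    using assms by (intro spec_norm_le[of _ n n]) (auto simp: smult_mat_mult_vec[of _ n n] vec_norm2_smult)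
  have "eigenvector (a \<cdot>\<^sub>m 1\<^sub>m n) (unit_vec n 0) a"
    using assms unfolding eigenvector_def by (simp add: smult_mat_mult_vec[of _ n n])
  then show "cmod a \<le> spec_norm (a \<cdot>\<^sub>m 1\<^sub>m n)"
    by (intro eigenvalue_norm_le_spec_norm[of _ n]) auto
qed

lemma spec_norm_pow_mat_le:
  assumes A: "A \<in> carrier_mat n n" and "n > 0"
  shows "spec_norm (A ^\<^sub>m k) \<le> spec_norm A ^ k"
proof (rule spec_norm_le[of _ n n])
  fix x :: "complex vec" assume "x \<in> carrier_vec n"
  then show "vec_norm2 (A ^\<^sub>m k *\<^sub>v x) \<le> spec_norm A ^ k * vec_norm2 x"
  proof (induction k arbitrary: x)
    case (Suc k)
    have "A ^\<^sub>m Suc k *\<^sub>v x = A ^\<^sub>m k *\<^sub>v (A *\<^sub>v x)"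
      using A Suc.prems by (simp add: assoc_mult_mat_vec[of _ n n _ n])
    also have "vec_norm2 \<dots> \<le> spec_norm A ^ k * vec_norm2 (A *\<^sub>v x)"
      using A Suc by simp
    also have "\<dots> \<le> spec_norm A ^ k * (spec_norm A * vec_norm2 x)"
      using spec_norm_mult_vec_le[OF A Suc.prems] spec_norm_nonneg[OF A \<open>n > 0\<close>]
      by (intro mult_left_mono) auto
    finally show ?case by (simp add: ac_simps)
  qed (use A in simp)
qed (use A \<open>n > 0\<close> in auto)

lemma linear_le_quadratic_imp_zero:
  fixes a b :: real
  assumes le: "\<And>t. a * t \<le> b * t\<^sup>2"
  shows "a = 0"
proof (rule ccontr)
  assume "a \<noteq> 0"
  define t where "t = a / (2 * (\<bar>b\<bar> + 1))"
  have "t\<^sup>2 > 0" using \<open>a \<noteq> 0\<close> by (simp add: t_def)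
  have "b * t\<^sup>2 \<le> \<bar>b\<bar> * t\<^sup>2" by (simp add: mult_right_mono)
  also have "\<dots> < 2 * (\<bar>b\<bar> + 1) * t\<^sup>2" using \<open>t\<^sup>2 > 0\<close> by simp
  also have "\<dots> = a * t" by (simp add: t_def power2_eq_square)
  finally show False using le[of t] by simp
qed

lemma spec_norm_attained_cscalar_prod:
  assumes A: "A \<in> carrier_mat m n" and u: "u \<in> carrier_vec n" and x: "x \<in> carrier_vec n"
    and attained: "vec_norm2 (A *\<^sub>v u) = spec_norm A * vec_norm2 u"
  shows "(A *\<^sub>v x) \<bullet>c (A *\<^sub>v u) = (spec_norm A)\<^sup>2 * (x \<bullet>c u)"
proof -
  let ?\<sigma> = "spec_norm A"
  \<comment> \<open>The quadratic polynomial t \<mapsto> \<sigma>^2 |u + t y|^2 - |A (u + t y)|^2 is nonnegative and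
    vanishes at t = 0, so its linear coefficient vanishes.\<close>
  have re: "Re ((A *\<^sub>v y) \<bullet>c (A *\<^sub>v u)) = ?\<sigma>\<^sup>2 * Re (y \<bullet>c u)"
    if y: "y \<in> carrier_vec n" for y
  proof (rule eq_iff_diff_eq_0[THEN iffD2], rule linear_le_quadratic_imp_zero)
    fix t :: real
    have Ay: "A *\<^sub>v y \<in> carrier_vec m" "A *\<^sub>v u \<in> carrier_vec m" using A y u by auto
    have "vec_norm2 (A *\<^sub>v (u + of_real t \<cdot>\<^sub>v y)) \<le> ?\<sigma> * vec_norm2 (u + of_real t \<cdot>\<^sub>v y)"
      using A u y by (intro spec_norm_mult_vec_le) auto
    then have "(vec_norm2 (A *\<^sub>v u + of_real t \<cdot>\<^sub>v (A *\<^sub>v y)))\<^sup>2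
        \<le> ?\<sigma>\<^sup>2 * (vec_norm2 (u + of_real t \<cdot>\<^sub>v y))\<^sup>2"
      using A u y vec_norm2_nonneg
      by (simp add: mult_add_distrib_mat_vec[of _ m n] mult_mat_vec[of _ m n] power_mono
          flip: power_mult_distrib)
    then have "(vec_norm2 (A *\<^sub>v u))\<^sup>2 + 2 * t * Re ((A *\<^sub>v y) \<bullet>c (A *\<^sub>v u))
          + t\<^sup>2 * (vec_norm2 (A *\<^sub>v y))\<^sup>2
        \<le> ?\<sigma>\<^sup>2 * ((vec_norm2 u)\<^sup>2 + 2 * t * Re (y \<bullet>c u) + t\<^sup>2 * (vec_norm2 y)\<^sup>2)"
      using Ay u y
      by (simp add: power2_vec_norm2_add[of _ m] power2_vec_norm2_add[of _ n] vec_norm2_smult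
          smult_scalar_prod_distrib[of _ m] smult_scalar_prod_distrib[of _ n] power_mult_distrib mult.assoc)
    then show "(Re ((A *\<^sub>v y) \<bullet>c (A *\<^sub>v u)) - ?\<sigma>\<^sup>2 * Re (y \<bullet>c u)) * t
        \<le> ((?\<sigma>\<^sup>2 * (vec_norm2 y)\<^sup>2 - (vec_norm2 (A *\<^sub>v y))\<^sup>2) / 2) * t\<^sup>2"
      unfolding attained by (simp add: algebra_simps)
  qed
  have "Im ((A *\<^sub>v x) \<bullet>c (A *\<^sub>v u)) = ?\<sigma>\<^sup>2 * Im (x \<bullet>c u)"
    using re[of "\<i> \<cdot>\<^sub>v x"] A u x
    by (simp add: mult_mat_vec[of _ m n] smult_scalar_prod_distrib[of _ m] smult_scalar_prod_distrib[of _ n])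
  then show ?thesis using re[OF x] by (simp add: complex_eq_iff)
qed

lemma eigenvector_pow_mat:
  assumes A: "A \<in> carrier_mat n n" and ev: "eigenvector A v k"
  shows "eigenvector (A ^\<^sub>m m) v (k ^ m)"
  using ev eigenvector_pow[OF A ev] A unfolding eigenvector_def by simp

lemma spec_norm_pow_mat_eq_if_eigenvalue_attains:
  assumes A: "A \<in> carrier_mat n n" and ev: "eigenvector A v k" and k: "cmod k = spec_norm A"
  shows "spec_norm (A ^\<^sub>m m) = spec_norm A ^ m"
proof (rule antisym)
  have "n > 0"
    using A ev unfolding eigenvector_def by (auto intro: gr0I)
  then show "spec_norm (A ^\<^sub>m m) \<le> spec_norm A ^ m"
    by (rule spec_norm_pow_mat_le[OF A])
  show "spec_norm A ^ m \<le> spec_norm (A ^\<^sub>m m)"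
    using eigenvalue_norm_le_spec_norm[OF pow_carrier_mat[OF A] eigenvector_pow_mat[OF A ev]]
    by (simp add: norm_power k)
qed

lemma mult_mat_vec_ones:
  fixes A :: "'a :: semiring_1 mat"
  shows "A \<in> carrier_mat m n \<Longrightarrow> A *\<^sub>v vec n (\<lambda>_. 1) = vec m (\<lambda>i. \<Sum>j<n. A $$ (i, j))"
  by (intro eq_vecI) (auto simp: scalar_prod_def lessThan_atLeast0)

lemma column_sums_eq_if_spec_norm_attained_at_ones:
  assumes A: "A \<in> carrier_mat n n" and k: "k < n"
    and Ae: "A *\<^sub>v vec n (\<lambda>_. 1) = c \<cdot>\<^sub>v vec n (\<lambda>_. 1)" and c: "cmod c = spec_norm A"
  shows "(\<Sum>i<n. A $$ (i, k)) = c"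
proof (cases "c = 0")
  case True
  have "vec_norm2 (col A k) \<le> spec_norm A * vec_norm2 (unit_vec n k)"
    using spec_norm_mult_vec_le[OF A, of "unit_vec n k"] by (simp add: mult_mat_vec_unit_vec[OF A k])
  then have "col A k = 0\<^sub>v n"
    using True c A vec_norm2_nonneg[of "col A k"] vec_norm2_eq_0_iff[of "col A k"] by simp
  then have "A $$ (i, k) = 0" if "i < n" for i
    using A k that by (metis carrier_matD index_col index_zero_vec(1))
  then show ?thesis using True by simp
next
  case False
  let ?e = "vec n (\<lambda>_. 1 :: complex)"
  have "vec_norm2 (A *\<^sub>v ?e) = spec_norm A * vec_norm2 ?e"
    by (simp add: Ae vec_norm2_smult c)
  then have "col A k \<bullet>c (c \<cdot>\<^sub>v ?e) = (spec_norm A)\<^sup>2 * (unit_vec n k \<bullet>c ?e)"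
    using spec_norm_attained_cscalar_prod[OF A _ unit_vec_carrier, of ?e k]
    by (simp add: Ae mult_mat_vec_unit_vec[OF A k])
  then have "(\<Sum>i<n. A $$ (i, k)) * cnj c = c * cnj c"
    using A k by (simp add: scalar_prod_def lessThan_atLeast0 sum_distrib_right
        flip: c complex_norm_square)
  then show ?thesis using False by simp
qed

lemma block_structure_carrier:
  assumes "sum_list ks + sum_list ns = n"
  shows "block_structure ks ns \<subseteq> carrier_mat n n"
proof
  fix D assume "D \<in> block_structure ks ns"
  then obtain ds Ds where D: "D = diag_block_mat (map (\<lambda>(d, k). d \<cdot>\<^sub>m 1\<^sub>m k) (zip ds ks) @ Ds)"
    and len: "length ds = length ks" "length Ds = length ns"
    and Ds: "\<forall>j<length ns. Ds ! j \<in> carrier_mat (ns ! j) (ns ! j)"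
    unfolding block_structure_def by blast
  have scalar_dims: "map dim_row (map (\<lambda>(d, k). d \<cdot>\<^sub>m 1\<^sub>m k) (zip ds ks)) = ks"
    "map dim_col (map (\<lambda>(d, k). d \<cdot>\<^sub>m 1\<^sub>m k) (zip ds ks)) = ks"
    using len(1) by (simp_all add: list_eq_iff_nth_eq)
  have "dim_row (Ds ! j) = ns ! j" "dim_col (Ds ! j) = ns ! j" if "j < length ns" for j
    using Ds[rule_format, OF that] by auto
  then have full_dims: "map dim_row Ds = ns" "map dim_col Ds = ns"
    using len(2) by (simp_all add: list_eq_iff_nth_eq)
  have "dim_row D = n" "dim_col D = n"
    unfolding D dim_diag_block_mat map_append sum_list_append scalar_dims full_dims
    using assms by simp_all
  then show "D \<in> carrier_mat n n" by (rule carrier_matI)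
qed

lemma diag_block_mat_smult_one_mat:
  fixes a :: "'a :: semiring_1"
  shows "diag_block_mat (map (\<lambda>k. a \<cdot>\<^sub>m 1\<^sub>m k) ks) = a \<cdot>\<^sub>m 1\<^sub>m (sum_list ks)"
proof (induction ks)
  case (Cons k ks)
  show ?case
    unfolding list.map diag_block_mat.simps Let_def Cons.IH by (intro eq_matI) auto
qed auto

lemma smult_one_mat_mem_block_structure:
  assumes "sum_list ks + sum_list ns = n"
  shows "a \<cdot>\<^sub>m 1\<^sub>m n \<in> block_structure ks ns"
proof -
  have "map (\<lambda>(d, k). d \<cdot>\<^sub>m 1\<^sub>m k) (zip (replicate (length ks) a) ks) = map (\<lambda>k. a \<cdot>\<^sub>m 1\<^sub>m k) ks"
    by (induction ks) auto
  then have "a \<cdot>\<^sub>m 1\<^sub>m n = diag_block_mat (map (\<lambda>(d, k). d \<cdot>\<^sub>m 1\<^sub>m k) (zip (replicate (length ks) a) ks)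
      @ map (\<lambda>k. a \<cdot>\<^sub>m 1\<^sub>m k) ns)"
    using assms by (simp flip: map_append add: diag_block_mat_smult_one_mat)
  then show ?thesis
    unfolding block_structure_def
    by (intro CollectI exI[of _ "replicate (length ks) a"] exI[of _ "map (\<lambda>k. a \<cdot>\<^sub>m 1\<^sub>m k) ns"]) auto
qed

lemma one_plus_mult_mat_mult_vec:
  fixes M D :: "'a :: semiring_1 mat"
  assumes "M \<in> carrier_mat n n" "D \<in> carrier_mat n n" "v \<in> carrier_vec n"
  shows "(1\<^sub>m n + M * D) *\<^sub>v v = v + M *\<^sub>v (D *\<^sub>v v)"
  using assms by (simp add: add_mult_distrib_mat_vec[of _ n n] assoc_mult_mat_vec[of _ n n _ n])

lemma spec_norm_mult_ge_one_if_singular: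
  assumes M: "M \<in> carrier_mat n n" and D: "D \<in> carrier_mat n n"
    and singular: "det (1\<^sub>m n + M * D) = 0"
  shows "1 \<le> spec_norm M * spec_norm D"
proof -
  obtain v where v: "v \<in> carrier_vec n" "v \<noteq> 0\<^sub>v n" and "(1\<^sub>m n + M * D) *\<^sub>v v = 0\<^sub>v n"
    using singular det_0_iff_vec_prod_zero[of "1\<^sub>m n + M * D" n] M D by auto
  then have sum0: "v + M *\<^sub>v (D *\<^sub>v v) = 0\<^sub>v n"
    using one_plus_mult_mat_mult_vec[OF M D v(1)] by simp
  have "v = (-1) \<cdot>\<^sub>v (M *\<^sub>v (D *\<^sub>v v))"
  proof (rule eq_vecI)
    fix i assume "i < dim_vec ((-1) \<cdot>\<^sub>v (M *\<^sub>v (D *\<^sub>v v)))"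
    then show "v $ i = ((-1) \<cdot>\<^sub>v (M *\<^sub>v (D *\<^sub>v v))) $ i"
      using arg_cong[OF sum0, of "\<lambda>w. w $ i"] M v by (simp add: eq_neg_iff_add_eq_0)
  qed (use M v in simp)
  then have "vec_norm2 v = vec_norm2 (M *\<^sub>v (D *\<^sub>v v))"
    by (metis norm_minus_cancel norm_one vec_norm2_smult mult_1)
  also have "\<dots> \<le> spec_norm M * vec_norm2 (D *\<^sub>v v)"
    using M D v by (intro spec_norm_mult_vec_le) auto
  also have "\<dots> \<le> spec_norm M * (spec_norm D * vec_norm2 v)"
    using spec_norm_mult_vec_le[OF D v(1)] spec_norm_nonneg[OF M] v
    by (intro mult_left_mono) (auto simp: gr0I)
  finally have "1 * vec_norm2 v \<le> (spec_norm M * spec_norm D) * vec_norm2 v"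
    by (simp add: ac_simps)
  moreover have "vec_norm2 v > 0"
    using v vec_norm2_eq_0_iff[of v] vec_norm2_nonneg[of v] by fastforce
  ultimately show ?thesis by (meson mult_le_cancel_right_pos)
qed

lemma det_one_plus_mult_scalar_eq_0:
  fixes M :: "'a :: field mat"
  assumes M: "M \<in> carrier_mat n n" and ev: "eigenvector M v k" and "k \<noteq> 0"
  shows "det (1\<^sub>m n + M * ((- 1 / k) \<cdot>\<^sub>m 1\<^sub>m n)) = 0"
proof -
  let ?D = "(- 1 / k) \<cdot>\<^sub>m 1\<^sub>m n"
  have v: "v \<in> carrier_vec n" "v \<noteq> 0\<^sub>v n" and Mv: "M *\<^sub>v v = k \<cdot>\<^sub>v v"
    using M ev unfolding eigenvector_def by auto
  have D: "?D \<in> carrier_mat n n" by simp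
  have "(1\<^sub>m n + M * ?D) *\<^sub>v v = v + M *\<^sub>v (?D *\<^sub>v v)"
    by (rule one_plus_mult_mat_mult_vec[OF M D v(1)])
  also have "M *\<^sub>v (?D *\<^sub>v v) = (- 1 / k) \<cdot>\<^sub>v (k \<cdot>\<^sub>v v)"
    using M v(1) by (simp add: smult_mat_mult_vec[of _ n n] mult_mat_vec[of _ n n] Mv)
  also have "v + (- 1 / k) \<cdot>\<^sub>v (k \<cdot>\<^sub>v v) = 0\<^sub>v n"
    using v(1) \<open>k \<noteq> 0\<close> by (intro eq_vecI) (simp_all add: field_simps)
  finally show ?thesis
    using det_0_iff_vec_prod_zero[of "1\<^sub>m n + M * ?D" n] M D v by auto
qed

lemma ssv_eq_spec_norm_if_eigenvalue_attains:
  assumes M: "M \<in> carrier_mat n n" and B: "B \<subseteq> carrier_mat n n"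
    and scalars: "\<And>a. a \<cdot>\<^sub>m 1\<^sub>m n \<in> B"
    and ev: "eigenvector M v k" and k: "cmod k = spec_norm M"
  shows "ssv B M = spec_norm M"
proof -
  have "n > 0"
    using M ev unfolding eigenvector_def by (auto intro: gr0I)
  let ?S = "{spec_norm D | D. D \<in> B \<and> det (1\<^sub>m n + M * D) = 0}"
  have lower: "1 \<le> spec_norm M * spec_norm D" if "D \<in> B" "det (1\<^sub>m n + M * D) = 0" for D
    using spec_norm_mult_ge_one_if_singular[OF M _ that(2)] B that(1) by auto
  have dim: "dim_row M = n" using M by simp
  show ?thesis
  proof (cases "spec_norm M = 0")
    case True
    then have "\<forall>D\<in>B. det (1\<^sub>m n + M * D) \<noteq> 0" using lower by fastforce
    then show ?thesis unfolding ssv_def dim using True by simp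
  next
    case False
    then have pos: "spec_norm M > 0" using spec_norm_nonneg[OF M \<open>n > 0\<close>] by simp
    then have "k \<noteq> 0" using k by auto
    define D0 where "D0 = (- 1 / k) \<cdot>\<^sub>m 1\<^sub>m n"
    have "det (1\<^sub>m n + M * D0) = 0"
      unfolding D0_def by (rule det_one_plus_mult_scalar_eq_0[OF M ev \<open>k \<noteq> 0\<close>])
    moreover have "spec_norm D0 = 1 / spec_norm M"
      unfolding D0_def spec_norm_smult_one_mat[OF \<open>n > 0\<close>] k[symmetric] by (simp add: norm_divide)
    ultimately have "Inf ?S = 1 / spec_norm M"
      using scalars lower pos unfolding D0_def
      by (intro cInf_eq_minimum) (force, auto simp: field_simps)
    moreover have "\<not> (\<forall>D\<in>B. det (1\<^sub>m n + M * D) \<noteq> 0)"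
      using scalars \<open>det (1\<^sub>m n + M * D0) = 0\<close> unfolding D0_def by blast
    ultimately show ?thesis unfolding ssv_def dim by auto
  qed
qed

theorem proposition2p1:
  fixes A :: "complex mat" and n :: nat and c :: complex
  assumes n_pos: "n > 0"
    and A_carrier: "A \<in> carrier_mat n n"
    and row_sums: "\<forall>i<n. (\<Sum>j<n. A $$ (i, j)) = c"
  shows "cmod c \<le> spec_norm A \<and>
         (cmod c = spec_norm A \<longrightarrow> (\<forall>j<n. (\<Sum>i<n. A $$ (i, j)) = c)) \<and>
         (cmod c = spec_norm A \<longrightarrow>
         (\<forall>m ks ns. m \<ge> 1 \<longrightarrow> (\<forall>k\<in>set ks. k > 0) \<longrightarrow> (\<forall>k\<in>set ns. k > 0) \<longrightarrow>
            sum_list ks + sum_list ns = n \<longrightarrow>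
            ssv (block_structure ks ns) (A ^\<^sub>m m) = spec_norm A ^ m))"
proof -
  let ?e = "vec n (\<lambda>_. 1 :: complex)"
  have Ae: "A *\<^sub>v ?e = c \<cdot>\<^sub>v ?e"
    using A_carrier row_sums by (auto simp: mult_mat_vec_ones)
  have ev: "eigenvector A ?e c"
    using A_carrier n_pos Ae unfolding eigenvector_def by (auto simp: vec_eq_iff)
  have "ssv (block_structure ks ns) (A ^\<^sub>m m) = spec_norm A ^ m"
    if attained: "cmod c = spec_norm A" and dims: "sum_list ks + sum_list ns = n" for m ks ns
  proof -
    have pow: "spec_norm (A ^\<^sub>m m) = spec_norm A ^ m"
      by (rule spec_norm_pow_mat_eq_if_eigenvalue_attains[OF A_carrier ev attained])
    show ?thesis
      unfolding pow[symmetric]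
    proof (rule ssv_eq_spec_norm_if_eigenvalue_attains)
      show "eigenvector (A ^\<^sub>m m) ?e (c ^ m)" by (rule eigenvector_pow_mat[OF A_carrier ev])
      show "cmod (c ^ m) = spec_norm (A ^\<^sub>m m)" by (simp add: pow norm_power attained)
    qed (use A_carrier block_structure_carrier[OF dims] smult_one_mat_mem_block_structure[OF dims] in auto)
  qed
  then show ?thesis
    using eigenvalue_norm_le_spec_norm[OF A_carrier ev]
      column_sums_eq_if_spec_norm_attained_at_ones[OF A_carrier _ Ae] by blast
qed

end
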